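(* Let $n\ge4$ be even. Let $G$ have node set $V_1\cup V_2\cup\{v\}$ with $|V_1|=n/2$, $|V_2|=n/2-1$ (disjoint, not containing $v$), and edge set $\{(x,y):x\in V_1,\ y\in V_2\cup\{v\}\}$. Consider the \textsc{Random Pick} process on $G$ from the initial state in which only $v$ is colored. Then with probability $1-o(1)$ as $n\to\infty$, the convergence time exceeds $\frac18 n\log_2 n$. (Here $\Delta_+(G)=n/2$ and $D(G)=1$.)
   Context: A state is a map $V\to\{b,r,u\}$ (blue, red, uncolored); colored means blue or red. \textsc{Random Pick} process: in each round $t$ every node $x$ with at least one out-neighbor picks an out-neighbor $ps_t(x)$ uniformly at random, independently; an uncolored node adopts the color of its pick if the pick is colored, and all other nodes keep their color. A state is stable if no uncolored node has a colored out-neighbor; the convergence time is the first round $t\ge0$ at which the state is stable. *)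

theory Defs
  imports "HOL-Probability.Probability"
begin

datatype color = Blue | Red | Uncolored

type_synonym 'a state = "'a \<Rightarrow> color"

definition colored :: "color \<Rightarrow> bool" where
  "colored c \<longleftrightarrow> c \<noteq> Uncolored"

definition out_nbrs :: "('a \<times> 'a) set \<Rightarrow> 'a \<Rightarrow> 'a set" where
  "out_nbrs E x = {y. (x, y) \<in> E}"

definition rp_step :: "'a set \<Rightarrow> ('a \<times> 'a) set \<Rightarrow> 'a state \<Rightarrow> 'a state pmf" where
  "rp_step V E s =
     map_pmf (\<lambda>pick x. if x \<in> V \<and> out_nbrs E x \<noteq> {} \<and> s x = Uncolored \<and> colored (s (pick x))
                       then s (pick x) else s x)
       (Pi_pmf {x \<in> V. out_nbrs E x \<noteq> {}} undefined (\<lambda>x. pmf_of_set (out_nbrs E x)))"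

definition stable :: "'a set \<Rightarrow> ('a \<times> 'a) set \<Rightarrow> 'a state \<Rightarrow> bool" where
  "stable V E s \<longleftrightarrow> (\<forall>x\<in>V. s x = Uncolored \<longrightarrow> (\<forall>y\<in>out_nbrs E x. \<not> colored (s y)))"

fun rp_traj :: "'a set \<Rightarrow> ('a \<times> 'a) set \<Rightarrow> 'a state \<Rightarrow> nat \<Rightarrow> 'a state list pmf" where
  "rp_traj V E s0 0 = return_pmf [s0]"
| "rp_traj V E s0 (Suc k) =
     bind_pmf (rp_traj V E s0 k) (\<lambda>xs. map_pmf (\<lambda>s'. xs @ [s']) (rp_step V E (last xs)))"

text \<open>Probability that the convergence time (first round t \<ge> 0 with a stable state)
  exceeds T, i.e. that no round t with t \<le> T is stable.\<close>
definition conv_time_exceeds_prob :: "'a set \<Rightarrow> ('a \<times> 'a) set \<Rightarrow> 'a state \<Rightarrow> real \<Rightarrow> real" where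
  "conv_time_exceeds_prob V E s0 T =
     measure_pmf.prob (rp_traj V E s0 (nat \<lfloor>T\<rfloor>))
       {xs. \<forall>t < length xs. real t \<le> T \<longrightarrow> \<not> stable V E (xs ! t)}"

end

theory Submission
  imports Defs "HOL-Analysis.Harmonic_Numbers" "HOL-Real_Asymp.Real_Asymp"
begin

text \<open>
  As long as only \<open>v\<close> is coloured among the targets \<open>V\<^sub>2 \<union> {v}\<close>, an uncoloured node of \<open>V\<^sub>1\<close>
  becomes coloured in a round exactly when it picks \<open>v\<close>, which happens with probability
  \<open>1 - q\<close> where \<open>q = |V\<^sub>2| / (|V\<^sub>2| + 1) = 1 - 2/n\<close>, independently of all other nodes and rounds.
  Hence all of \<open>V\<^sub>1\<close> is coloured after \<open>k\<close> rounds with probability \<open>(1 - q\<^sup>k)\<^bsup>n/2\<^esup>\<close>,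
  and the state is stable only once that has happened. For \<open>k = n log\<^sub>2 n / 8\<close> we have
  \<open>q\<^sup>k \<ge> n\<^bsup>-3/4\<^esup>\<close>, so this probability is at most \<open>exp (- n\<^bsup>1/4\<^esup> / 4) \<rightarrow> 0\<close>.
\<close>

lemma measure_bind_pmf:
  "measure_pmf.prob (bind_pmf p f) A = measure_pmf.expectation p (\<lambda>x. measure_pmf.prob (f x) A)"
  unfolding measure_pmf_bind
  by (rule measure_pmf.measure_bind[where N = "count_space UNIV"])
     (auto intro: measurable_pmf_measure1 simp: space_subprob_algebra measure_pmf.subprob_space_axioms)

fun rp_iter :: "'a set \<Rightarrow> ('a \<times> 'a) set \<Rightarrow> nat \<Rightarrow> 'a state \<Rightarrow> 'a state pmf" where
  "rp_iter V E 0 s = return_pmf s"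
| "rp_iter V E (Suc k) s = bind_pmf (rp_step V E s) (rp_iter V E k)"

lemma rp_iter_Suc_last: "rp_iter V E (Suc k) s = bind_pmf (rp_iter V E k s) (rp_step V E)"
proof (induction k arbitrary: s)
  case 0
  have "rp_iter V E 0 = return_pmf" by (rule ext) simp
  then show ?case by (simp add: bind_return_pmf bind_return_pmf')
next
  case (Suc k)
  have "rp_iter V E (Suc (Suc k)) s = bind_pmf (rp_step V E s) (rp_iter V E (Suc k))"
    by (rule rp_iter.simps(2))
  also have "\<dots> = bind_pmf (rp_step V E s) (\<lambda>s'. bind_pmf (rp_iter V E k s') (rp_step V E))"
    by (rule bind_pmf_cong[OF refl Suc.IH])
  also have "\<dots> = bind_pmf (rp_iter V E (Suc k) s) (rp_step V E)"
    by (simp add: bind_assoc_pmf)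
  finally show ?case .
qed

lemma map_last_rp_traj: "map_pmf last (rp_traj V E s0 k) = rp_iter V E k s0"
proof (induction k)
  case (Suc k)
  have "map_pmf last (rp_traj V E s0 (Suc k)) = bind_pmf (map_pmf last (rp_traj V E s0 k)) (rp_step V E)"
    by (simp add: map_bind_pmf bind_map_pmf pmf.map_comp o_def)
  then show ?case by (simp only: Suc.IH rp_iter_Suc_last)
qed simp

lemma rp_traj_antimono:
  fixes f :: "'a state \<Rightarrow> 'b :: order"
  assumes step: "\<And>s s'. P s \<Longrightarrow> s' \<in> set_pmf (rp_step V E s) \<Longrightarrow> P s' \<and> f s' \<le> f s"
    and "P s0" and "xs \<in> set_pmf (rp_traj V E s0 k)"
  shows "P (last xs) \<and> (\<forall>t < length xs. P (xs ! t) \<and> f (last xs) \<le> f (xs ! t))"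
  using assms(3)
proof (induction k arbitrary: xs)
  case 0
  then show ?case using \<open>P s0\<close> by simp
next
  case (Suc k)
  then obtain ys s' where ys: "ys \<in> set_pmf (rp_traj V E s0 k)"
    and s': "s' \<in> set_pmf (rp_step V E (last ys))" and xs: "xs = ys @ [s']"
    by auto
  note IH = Suc.IH[OF ys]
  with step s' have "P s'" "f s' \<le> f (last ys)" by blast+
  with IH show ?case
    unfolding xs by (auto simp: nth_append less_Suc_eq intro: order_trans)
qed

locale bipartite_lower_bound_graph =
  fixes V1 V2 :: "'a set" and v :: 'a
  assumes finite_V1: "finite V1" and finite_V2: "finite V2" and disjoint: "V1 \<inter> V2 = {}"
    and v_notin_V1: "v \<notin> V1" and v_notin_V2: "v \<notin> V2"
begin

abbreviation nodes :: "'a set" where "nodes \<equiv> V1 \<union> V2 \<union> {v}"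
abbreviation edges :: "('a \<times> 'a) set" where "edges \<equiv> {(x, y). x \<in> V1 \<and> y \<in> V2 \<union> {v}}"
abbreviation pick_pmf :: "('a \<Rightarrow> 'a) pmf" where
  "pick_pmf \<equiv> Pi_pmf V1 undefined (\<lambda>_. pmf_of_set (V2 \<union> {v}))"

definition only_v_colored :: "'a state \<Rightarrow> bool" where
  "only_v_colored s \<longleftrightarrow> colored (s v) \<and> (\<forall>y\<in>V2. s y = Uncolored)"

definition uncolored :: "'a state \<Rightarrow> 'a set" where
  "uncolored s = {x\<in>V1. s x = Uncolored}"

definition adopt :: "'a state \<Rightarrow> ('a \<Rightarrow> 'a) \<Rightarrow> 'a state" where
  "adopt s pick = (\<lambda>x. if x \<in> V1 \<and> s x = Uncolored \<and> colored (s (pick x)) then s (pick x) else s x)"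

definition stay_prob :: real where
  "stay_prob = real (card V2) / (real (card V2) + 1)"

lemma out_nbrs_edges: "out_nbrs edges x = (if x \<in> V1 then V2 \<union> {v} else {})"
  unfolding out_nbrs_def by auto

lemma rp_step_eq_adopt: "rp_step nodes edges s = map_pmf (adopt s) pick_pmf"
proof -
  have "{x \<in> nodes. out_nbrs edges x \<noteq> {}} = V1"
    unfolding out_nbrs_edges by auto
  moreover have "Pi_pmf V1 undefined (\<lambda>x. pmf_of_set (out_nbrs edges x)) = pick_pmf"
    unfolding out_nbrs_edges by (rule Pi_pmf_cong) auto
  ultimately show ?thesis
    unfolding rp_step_def adopt_def out_nbrs_edges by (intro map_pmf_cong) auto
qed

lemma pick_in_targets: "pick \<in> set_pmf pick_pmf \<Longrightarrow> x \<in> V1 \<Longrightarrow> pick x \<in> V2 \<union> {v}"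
  using finite_V1 finite_V2 by (auto simp: set_Pi_pmf PiE_dflt_def)

lemma uncolored_adopt:
  assumes "only_v_colored s" and "pick \<in> set_pmf pick_pmf"
  shows "uncolored (adopt s pick) = {x \<in> uncolored s. pick x \<noteq> v}"
proof -
  have "colored (s (pick x)) \<longleftrightarrow> pick x = v" if "x \<in> V1" for x
    using pick_in_targets[OF assms(2) that] assms(1) by (auto simp: only_v_colored_def colored_def)
  then show ?thesis
    using assms(1) by (auto simp: uncolored_def adopt_def only_v_colored_def colored_def)
qed

lemma only_v_colored_adopt: "only_v_colored s \<Longrightarrow> only_v_colored (adopt s pick)"
  using disjoint v_notin_V1 v_notin_V2 by (auto simp: adopt_def only_v_colored_def)

lemma rp_step_only_v_colored:
  "only_v_colored s \<Longrightarrow> s' \<in> set_pmf (rp_step nodes edges s) \<Longrightarrow>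
     only_v_colored s' \<and> uncolored s' \<subseteq> uncolored s"
  unfolding rp_step_eq_adopt using uncolored_adopt only_v_colored_adopt by auto

lemma stable_iff_uncolored_empty: "only_v_colored s \<Longrightarrow> stable nodes edges s \<longleftrightarrow> uncolored s = {}"
  unfolding stable_def out_nbrs_edges by (auto simp: uncolored_def only_v_colored_def colored_def)

lemma expectation_pow_card_uncolored:
  assumes "only_v_colored s" and "0 \<le> a"
  shows "measure_pmf.expectation (rp_step nodes edges s) (\<lambda>s'. a ^ card (uncolored s'))
           = (1 - stay_prob + stay_prob * a) ^ card (uncolored s)"
proof -
  define g where "g x y = (if x \<in> uncolored s \<and> y \<noteq> v then a else 1)" for x y
  define b where "b = 1 - stay_prob + stay_prob * a"
  have card_targets: "card (V2 \<union> {v}) = card V2 + 1"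
    using finite_V2 v_notin_V2 by simp
  have b_eq: "b = (1 + real (card V2) * a) / (real (card V2) + 1)"
    by (simp add: b_def stay_prob_def field_simps)
  have "a ^ card (uncolored (adopt s pick)) = (\<Prod>x\<in>V1. g x (pick x))"
    if "pick \<in> set_pmf pick_pmf" for pick
  proof -
    have "(\<Prod>x\<in>V1. g x (pick x)) = (\<Prod>x\<in>{x\<in>V1. x \<in> uncolored s \<and> pick x \<noteq> v}. a)"
      using finite_V1 by (subst prod.inter_filter) (auto simp: g_def)
    also have "{x\<in>V1. x \<in> uncolored s \<and> pick x \<noteq> v} = uncolored (adopt s pick)"
      using uncolored_adopt[OF assms(1) that] by (auto simp: uncolored_def)
    finally show ?thesis by simp
  qed
  then have "measure_pmf.expectation (rp_step nodes edges s) (\<lambda>s'. a ^ card (uncolored s'))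
      = measure_pmf.expectation pick_pmf (\<lambda>pick. \<Prod>x\<in>V1. g x (pick x))"
    unfolding rp_step_eq_adopt by (auto intro!: integral_cong_AE AE_pmfI)
  also have "\<dots> = (\<Prod>x\<in>V1. measure_pmf.expectation (pmf_of_set (V2 \<union> {v})) (g x))"
    using finite_V1 finite_V2 assms(2)
    by (intro expectation_prod_Pi_pmf integrable_measure_pmf_finite) (auto simp: g_def)
  also have "\<dots> = (\<Prod>x\<in>V1. if x \<in> uncolored s then b else 1)"
  proof (intro prod.cong refl)
    fix x
    have "(\<Sum>y\<in>V2. g x y) = (\<Sum>y\<in>V2. if x \<in> uncolored s then a else 1)"
      using v_notin_V2 by (intro sum.cong) (auto simp: g_def)
    then have "sum (g x) (V2 \<union> {v}) = (if x \<in> uncolored s then 1 + real (card V2) * a else card V2 + 1)"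
      using finite_V2 v_notin_V2 by (simp add: g_def)
    then show "measure_pmf.expectation (pmf_of_set (V2 \<union> {v})) (g x) = (if x \<in> uncolored s then b else 1)"
      using finite_V2 card_targets by (simp add: integral_pmf_of_set b_eq)
  qed
  also have "\<dots> = b ^ card (uncolored s)"
    using finite_V1 by (simp add: prod.If_cases uncolored_def Int_def)
  finally show ?thesis unfolding b_def .
qed

lemma prob_rp_iter_all_colored:
  "only_v_colored s \<Longrightarrow>
     measure_pmf.prob (rp_iter nodes edges k s) {s'. uncolored s' = {}} = (1 - stay_prob ^ k) ^ card (uncolored s)"
proof (induction k arbitrary: s)
  case 0
  have "finite (uncolored s)" using finite_V1 by (simp add: uncolored_def)
  then show ?case by (cases "uncolored s = {}") auto
next
  case (Suc k)
  have q: "0 \<le> stay_prob" "stay_prob \<le> 1" by (auto simp: stay_prob_def)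
  have "measure_pmf.prob (rp_iter nodes edges (Suc k) s) {s'. uncolored s' = {}}
      = measure_pmf.expectation (rp_step nodes edges s) (\<lambda>s'. (1 - stay_prob ^ k) ^ card (uncolored s'))"
    unfolding rp_iter.simps measure_bind_pmf
    using Suc.IH rp_step_only_v_colored[OF Suc.prems] by (auto intro!: integral_cong_AE AE_pmfI)
  also have "\<dots> = (1 - stay_prob + stay_prob * (1 - stay_prob ^ k)) ^ card (uncolored s)"
    using q by (intro expectation_pow_card_uncolored Suc.prems) (simp add: power_le_one)
  finally show ?case by (simp add: algebra_simps)
qed

lemma conv_time_exceeds_prob_ge:
  assumes "only_v_colored s0"
  shows "1 - (1 - stay_prob ^ nat \<lfloor>T\<rfloor>) ^ card (uncolored s0) \<le> conv_time_exceeds_prob nodes edges s0 T"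
proof -
  define P where "P = rp_traj nodes edges s0 (nat \<lfloor>T\<rfloor>)"
  have "\<forall>t < length xs. \<not> stable nodes edges (xs ! t)"
    if "xs \<in> set_pmf P" and "uncolored (last xs) \<noteq> {}" for xs
    using rp_traj_antimono[of only_v_colored, OF rp_step_only_v_colored assms that(1)[unfolded P_def]]
      that(2) stable_iff_uncolored_empty by blast
  then have "measure_pmf.prob P {xs. uncolored (last xs) \<noteq> {}} \<le> conv_time_exceeds_prob nodes edges s0 T"
    unfolding conv_time_exceeds_prob_def P_def[symmetric]
    by (intro measure_pmf.finite_measure_mono_AE AE_pmfI) auto
  moreover have "measure_pmf.prob P {xs. uncolored (last xs) \<noteq> {}}
      = 1 - measure_pmf.prob (map_pmf last P) {s. uncolored s = {}}"
    using measure_pmf.prob_compl[of "{xs. uncolored (last xs) = {}}" P]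
    by (simp add: Compl_eq_Diff_UNIV[symmetric] Collect_neg_eq[symmetric] vimage_def)
  ultimately show ?thesis
    using prob_rp_iter_all_colored[OF assms] by (simp add: P_def map_last_rp_traj)
qed

end

lemma conv_time_exceeds_prob_bipartite_ge:
  assumes "even n" "n \<ge> 4" "finite V1" "finite V2" "card V1 = n div 2" "card V2 = n div 2 - 1"
    and "V1 \<inter> V2 = {}" "v \<notin> V1" "v \<notin> V2" "colored c"
  shows "1 - (1 - (1 - 2 / real n) ^ nat \<lfloor>real n * log 2 (real n) / 8\<rfloor>) ^ (n div 2)
           \<le> conv_time_exceeds_prob (V1 \<union> V2 \<union> {v}) {(x, y). x \<in> V1 \<and> y \<in> V2 \<union> {v}}
                (\<lambda>x. if x = v then c else Uncolored) (real n * log 2 (real n) / 8)"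
proof -
  interpret bipartite_lower_bound_graph V1 V2 v
    using assms by unfold_locales
  define s0 where "s0 = (\<lambda>x. if x = v then c else Uncolored)"
  have "only_v_colored s0" "uncolored s0 = V1"
    using assms by (auto simp: only_v_colored_def uncolored_def s0_def)
  moreover have "stay_prob = 1 - 2 / real n"
    using assms by (auto elim!: evenE simp: stay_prob_def of_nat_diff field_simps)
  ultimately show ?thesis
    using conv_time_exceeds_prob_ge[of s0] assms(5) by (simp add: s0_def)
qed

lemma powr_le_pow_floor:
  fixes n :: nat assumes "4 \<le> n"
  shows "real n powr (-3/4) \<le> (1 - 2 / real n) ^ nat \<lfloor>real n * log 2 (real n) / 8\<rfloor>"
proof -
  define r where "r = real n"
  define T where "T = r * log 2 r / 8"
  define y where "y = 2 / r"
  have r4: "4 \<le> r" and y: "0 \<le> y" "y \<le> 1/2" and T0: "0 \<le> T"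
    using assms by (auto simp: r_def y_def T_def)
  have ln_y: "-2 * y \<le> ln (1 - y)"
  proof -
    have "- y - 2 * y\<^sup>2 \<le> ln (1 - y)"
      by (rule ln_one_minus_pos_lower_bound) (use y in auto)
    moreover have "2 * y\<^sup>2 \<le> y"
      using mult_left_mono[of "2 * y" 1 y] y by (simp add: power2_eq_square)
    ultimately show ?thesis by linarith
  qed
  txt \<open>\<open>ln 2 \<ge> 2/3\<close> turns \<open>T \<cdot> 2y = log\<^sub>2 r / 2\<close> into the exponent \<open>3/4\<close>.\<close>
  have "-(3/4) * ln r \<le> - ln r / (2 * ln 2)"
    using ln2_ge_two_thirds r4 by (simp add: field_simps)
  also have "\<dots> = T * (-2 * y)"
    using r4 by (simp add: T_def y_def log_def field_simps)
  also have "\<dots> \<le> T * ln (1 - y)"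
    using ln_y T0 by (rule mult_left_mono)
  also have "\<dots> \<le> real (nat \<lfloor>T\<rfloor>) * ln (1 - y)"
    using T0 y by (intro mult_right_mono_neg) auto
  finally have "exp (-(3/4) * ln r) \<le> exp (real (nat \<lfloor>T\<rfloor>) * ln (1 - y))"
    by simp
  then show ?thesis
    using r4 y by (simp add: powr_def exp_of_nat_mult r_def y_def T_def)
qed

lemma all_colored_prob_tendsto_zero:
  "(\<lambda>n. (1 - (1 - 2 / real n) ^ nat \<lfloor>real n * log 2 (real n) / 8\<rfloor>) ^ (n div 2)) \<longlonglongrightarrow> 0"
proof (rule tendsto_sandwich[where f = "\<lambda>_. 0"])
  show "\<forall>\<^sub>F n in sequentially. 0 \<le> (1 - (1 - 2 / real n) ^ nat \<lfloor>real n * log 2 (real n) / 8\<rfloor>) ^ (n div 2)"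
    by (auto intro!: eventually_sequentiallyI[of 4] zero_le_power simp: power_le_one)
  have "((\<lambda>x::real. exp (-(x / 4) * x powr (-3/4))) \<longlongrightarrow> 0) at_top"
    by real_asymp
  then show "(\<lambda>n. exp (-(real n / 4) * real n powr (-3/4))) \<longlonglongrightarrow> 0"
    by (rule filterlim_compose[OF _ filterlim_real_sequentially])
  show "\<forall>\<^sub>F n in sequentially. (1 - (1 - 2 / real n) ^ nat \<lfloor>real n * log 2 (real n) / 8\<rfloor>) ^ (n div 2)
          \<le> exp (-(real n / 4) * real n powr (-3/4))"
  proof (rule eventually_sequentiallyI[of 4])
    fix n :: nat assume n: "4 \<le> n"
    define x where "x = (1 - 2 / real n) ^ nat \<lfloor>real n * log 2 (real n) / 8\<rfloor>"
    have x: "real n powr (-3/4) \<le> x" "x \<le> 1"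
      using powr_le_pow_floor[OF n] n by (auto simp: x_def power_le_one)
    have "(1 - x) ^ (n div 2) \<le> exp (-x) ^ (n div 2)"
      using x powr_ge_zero[of "real n" "-3/4"]
      by (intro power_mono) (use exp_ge_add_one_self[of "-x"] in auto)
    also have "\<dots> = exp (- (real (n div 2) * x))"
      by (simp add: exp_of_nat_mult[symmetric])
    also have "\<dots> \<le> exp (-(real n / 4) * real n powr (-3/4))"
    proof -
      have "real n / 4 * real n powr (-3/4) \<le> real (n div 2) * x"
        using n x powr_ge_zero[of "real n" "-3/4"] by (intro mult_mono) linarith+
      then show ?thesis by simp
    qed
    finally show "(1 - x) ^ (n div 2) \<le> exp (-(real n / 4) * real n powr (-3/4))" .
  qed
qed simp

theorem mainTheorem8:
  fixes dummy :: "'a itself"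
  shows "\<forall>\<epsilon>>0. \<exists>N. \<forall>n\<ge>N. \<forall>(V1::'a set) V2 v c.
     even n \<and> n \<ge> 4 \<and> finite V1 \<and> finite V2 \<and>
     card V1 = n div 2 \<and> card V2 = n div 2 - 1 \<and>
     V1 \<inter> V2 = {} \<and> v \<notin> V1 \<and> v \<notin> V2 \<and> colored c \<longrightarrow>
     conv_time_exceeds_prob (V1 \<union> V2 \<union> {v}) {(x, y). x \<in> V1 \<and> y \<in> V2 \<union> {v}}
        (\<lambda>x. if x = v then c else Uncolored) (real n * log 2 (real n) / 8) \<ge> 1 - \<epsilon>"
proof -
  have "\<forall>\<epsilon>>0. \<exists>N. \<forall>n\<ge>N. (1 - (1 - 2 / real n) ^ nat \<lfloor>real n * log 2 (real n) / 8\<rfloor>) ^ (n div 2) < \<epsilon>"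
    using order_tendstoD(2)[OF all_colored_prob_tendsto_zero] by (simp add: eventually_sequentially)
  then show ?thesis
    using conv_time_exceeds_prob_bipartite_ge by (smt (verit))
qed

end
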